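(* Let $A$ be a unital involutive $k$-algebra and let $d:A^{\otimes3}\to A$ be the $k$-linear map with $d(a_0\otimes a_1\otimes a_2)=a_0a_1a_2-a_2\overline{a_1}a_0$. The homology of the partial chain complex $0\leftarrow A\xleftarrow{d}A^{\otimes3}$ at $A$, namely $A/\mathrm{Im}(d)$, is isomorphic to $HO_0(A)$.
   Context: An involutive $k$-algebra is a unital associative $k$-algebra with $k$-linear $a\mapsto\overline a$, $\overline{\overline a}=a$, $\overline{ab}=\overline b\,\overline a$, $\overline1=1$. Let $C_2=\{1,t\}$. The hyperoctahedral category $\Delta H$: objects $[n]=\{0,\dots,n\}$, $n\ge0$; a morphism $f:[n]\to[m]$ is a map of sets with a total order on each fibre and a $C_2$-label on each element of $[n]$; composition $g\circ f$ has fibre over $i$ equal to the concatenation, in the order of $g^{-1}(i)$, of the fibres $f^{-1}(j)$, each replaced by $f^{-1}(j)^t$ (order reversed, labels multiplied by $t$) when $j$ has label $t$ in $g$. The hyperoctahedral bar construction $\mathsf{H}_A:\Delta H\to\mathbf{Mod}_k$ sends $[n]\mapsto A^{\otimes(n+1)}$ and $f$ to $a_0\otimes\cdots\otimes a_n\mapsto b_0\otimes\cdots\otimes b_m$, $b_i$ being the ordered product over $x\in f^{-1}(i)$ of $a_x$ (label $1$) or $\overline{a_x}$ (label $t$), empty product $1_A$. Hyperoctahedral homology is $HO_n(A)=\mathrm{Tor}_n^{\Delta H}(k^{\star},\mathsf{H}_A)$ with $k^{\star}$ the constant right $\Delta H$-module at $k$. *)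

theory Defs
  imports Main "HOL-Library.Function_Algebras"
begin

text \<open>The unital associative ring structure of A is the type class ring_1 of 'a;
  the k-module structure is the scalar action sc; k is a commutative ring.\<close>
definition inv_algebra :: "('k::comm_ring_1 \<Rightarrow> 'a::ring_1 \<Rightarrow> 'a) \<Rightarrow> ('a \<Rightarrow> 'a) \<Rightarrow> bool" where
  "inv_algebra sc bar \<longleftrightarrow>
     (\<forall>r x y. sc r (x + y) = sc r x + sc r y) \<and>
     (\<forall>r q x. sc (r + q) x = sc r x + sc q x) \<and>
     (\<forall>r q x. sc (r * q) x = sc r (sc q x)) \<and>
     (\<forall>x. sc 1 x = x) \<and>
     (\<forall>r x y. sc r (x * y) = sc r x * y \<and> sc r (x * y) = x * sc r y) \<and>
     (\<forall>x y. bar (x + y) = bar x + bar y) \<and>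
     (\<forall>r x. bar (sc r x) = sc r (bar x)) \<and>
     (\<forall>x. bar (bar x) = x) \<and>
     (\<forall>x y. bar (x * y) = bar y * bar x) \<and>
     bar 1 = 1"

inductive_set kspan :: "('k \<Rightarrow> 'v::ab_group_add \<Rightarrow> 'v) \<Rightarrow> 'v set \<Rightarrow> 'v set"
  for sc :: "'k \<Rightarrow> 'v \<Rightarrow> 'v" and S :: "'v set" where
  kspan_zero: "0 \<in> kspan sc S"
| kspan_base: "x \<in> S \<Longrightarrow> x \<in> kspan sc S"
| kspan_add: "x \<in> kspan sc S \<Longrightarrow> y \<in> kspan sc S \<Longrightarrow> x + y \<in> kspan sc S"
| kspan_scale: "x \<in> kspan sc S \<Longrightarrow> sc r x \<in> kspan sc S"

text \<open>The quotient modules V/W and V'/W' are isomorphic as k-modules, expressed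
  on representatives: phi induces a well-defined, injective, surjective,
  k-linear map V/W \<rightarrow> V'/W'.\<close>
definition quot_iso ::
  "('k \<Rightarrow> 'v::ab_group_add \<Rightarrow> 'v) \<Rightarrow> 'v set \<Rightarrow> 'v set \<Rightarrow>
   ('k \<Rightarrow> 'w::ab_group_add \<Rightarrow> 'w) \<Rightarrow> 'w set \<Rightarrow> 'w set \<Rightarrow> bool" where
  "quot_iso sc V W sc' V' W' \<longleftrightarrow>
     (\<exists>\<phi>. (\<forall>x\<in>V. \<phi> x \<in> V') \<and>
          (\<forall>x\<in>V. \<forall>y\<in>V. (\<phi> x - \<phi> y \<in> W') \<longleftrightarrow> (x - y \<in> W)) \<and>
          (\<forall>z\<in>V'. \<exists>x\<in>V. \<phi> x - z \<in> W') \<and>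
          (\<forall>x\<in>V. \<forall>y\<in>V. \<phi> (x + y) - (\<phi> x + \<phi> y) \<in> W') \<and>
          (\<forall>r. \<forall>x\<in>V. \<phi> (sc r x) - sc' r (\<phi> x) \<in> W'))"

text \<open>Free k-module on nonempty words over A: finitely supported functions.
  The word [a_0,...,a_n] stands for the pure tensor a_0 \<otimes> ... \<otimes> a_n in A^{\<otimes>(n+1)}.\<close>
definition free_words :: "('a list \<Rightarrow> 'k::comm_ring_1) set" where
  "free_words = {c. finite {l. c l \<noteq> 0} \<and> (\<forall>l. c l \<noteq> 0 \<longrightarrow> l \<noteq> [])}"

definition fscale :: "'k::comm_ring_1 \<Rightarrow> ('a list \<Rightarrow> 'k) \<Rightarrow> ('a list \<Rightarrow> 'k)" where
  "fscale r c = (\<lambda>l. r * c l)"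

definition delta :: "'a list \<Rightarrow> ('a list \<Rightarrow> 'k::comm_ring_1)" where
  "delta w = (\<lambda>l. if l = w then 1 else 0)"

text \<open>A morphism [n] \<rightarrow> [m] of the hyperoctahedral category: the fibre over i is the
  list L!i (listed in its total order); the fibres partition {0..n}; lab x = True
  means x carries the label t.\<close>
definition dh_mor :: "nat \<Rightarrow> nat \<Rightarrow> nat list list \<Rightarrow> bool" where
  "dh_mor n m L \<longleftrightarrow> length L = Suc m \<and> distinct (concat L) \<and> set (concat L) = {0..n}"

definition dh_act :: "('a::ring_1 \<Rightarrow> 'a) \<Rightarrow> nat list list \<Rightarrow> (nat \<Rightarrow> bool) \<Rightarrow> 'a list \<Rightarrow> 'a list" where
  "dh_act bar L lab as =
     map (\<lambda>fib. prod_list (map (\<lambda>x. if lab x then bar (as ! x) else as ! x) fib)) L"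

text \<open>Relations: multilinearity (presenting each A^{\<otimes>(n+1)} as a quotient of the
  free module on words) and x ~ H_A(f)(x) for all morphisms f (giving
  k^* \<otimes>_{\<Delta>H} H_A = Tor_0).\<close>
definition HO0_gens :: "('k::comm_ring_1 \<Rightarrow> 'a::ring_1 \<Rightarrow> 'a) \<Rightarrow> ('a \<Rightarrow> 'a) \<Rightarrow> ('a list \<Rightarrow> 'k) set" where
  "HO0_gens sc bar =
     {delta (xs @ [a + b] @ ys) - delta (xs @ [a] @ ys) - delta (xs @ [b] @ ys) | xs a b ys. True}
   \<union> {delta (xs @ [sc r a] @ ys) - fscale r (delta (xs @ [a] @ ys)) | xs r a ys. True}
   \<union> {delta (dh_act bar L lab as) - delta as | n m L lab as. dh_mor n m L \<and> length as = Suc n}"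

definition HO0_rel :: "('k::comm_ring_1 \<Rightarrow> 'a::ring_1 \<Rightarrow> 'a) \<Rightarrow> ('a \<Rightarrow> 'a) \<Rightarrow> ('a list \<Rightarrow> 'k) set" where
  "HO0_rel sc bar = kspan fscale (HO0_gens sc bar)"

definition im_d :: "('k::comm_ring_1 \<Rightarrow> 'a::ring_1 \<Rightarrow> 'a) \<Rightarrow> ('a \<Rightarrow> 'a) \<Rightarrow> 'a set" where
  "im_d sc bar = kspan sc {a0 * a1 * a2 - a2 * bar a1 * a0 | a0 a1 a2. True}"

end

theory Submission
  imports Defs "HOL-Library.Multiset"
begin

text \<open>The isomorphism sends a to the one-letter word [a]. Modulo the relations, every word
  [a0, ..., an] equals the letter [a0 * ... * an] (via the morphism [n] \<rightarrow> [0]), so [_] is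
  onto, and the two morphisms [2] \<rightarrow> [0] with fibres (0, 1, 2) and (2, t1, 0) show that Im d
  maps to relations. Conversely, multiplying out words is a k-linear map that sends every
  relation into Im d: modulo Im d, products are commutative (a1 = 1) and insensitive to bars
  (a0 = 1), so H_A(f)(x) and x have congruent products.\<close>

definition equiv_mod :: "'v::ab_group_add set \<Rightarrow> 'v \<Rightarrow> 'v \<Rightarrow> bool"
  where "equiv_mod W x y \<longleftrightarrow> x - y \<in> W"

text \<open>The set comes first in equiv_mod so that \<dots> in calculations denotes the right-hand side.\<close>
abbreviation equiv_mod_syntax :: "'v::ab_group_add \<Rightarrow> 'v \<Rightarrow> 'v set \<Rightarrow> bool"
    (\<open>(_ \<sim> _ '(mod _'))\<close> [51, 51, 0] 50)
  where "x \<sim> y (mod W) \<equiv> equiv_mod W x y"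

lemma kspan_uminus:
  assumes "\<And>x. sc (-1) x = - x" and "x \<in> kspan sc S"
  shows "- x \<in> kspan sc S"
  using kspan_scale[OF assms(2), of "-1"] by (simp add: assms(1))

lemma kspan_diff:
  assumes "\<And>x. sc (-1) x = - x" and "x \<in> kspan sc S" "y \<in> kspan sc S"
  shows "x - y \<in> kspan sc S"
  using kspan_add[OF assms(2) kspan_uminus[OF assms(1,3)]] by simp

lemma kspan_sum:
  assumes "finite I" "\<And>i. i \<in> I \<Longrightarrow> f i \<in> kspan sc S"
  shows "sum f I \<in> kspan sc S"
  using assms by (induction I rule: finite_induct) (auto intro: kspan.intros)

lemma equiv_mod_refl [simp]: "x \<sim> x (mod kspan sc S)"
  by (simp add: equiv_mod_def kspan_zero)

lemma equiv_mod_trans [trans]: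
  "x \<sim> y (mod kspan sc S) \<Longrightarrow> y \<sim> z (mod kspan sc S) \<Longrightarrow> x \<sim> z (mod kspan sc S)"
  unfolding equiv_mod_def using kspan_add by fastforce

lemma equiv_mod_sym:
  assumes "\<And>x. sc (-1) x = - x" and "x \<sim> y (mod kspan sc S)"
  shows "y \<sim> x (mod kspan sc S)"
  using kspan_uminus[OF assms[unfolded equiv_mod_def]] by (simp add: equiv_mod_def)

lemma equiv_mod_diff:
  assumes "\<And>x. sc (-1) x = - x"
    and "x \<sim> x' (mod kspan sc S)" "y \<sim> y' (mod kspan sc S)"
  shows "x - y \<sim> x' - y' (mod kspan sc S)"
  using kspan_diff[OF assms[unfolded equiv_mod_def]] by (simp add: equiv_mod_def algebra_simps)

lemma equiv_mod_sum:
  assumes "finite I" "\<And>i. i \<in> I \<Longrightarrow> f i \<sim> g i (mod kspan sc S)"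
  shows "sum f I \<sim> sum g I (mod kspan sc S)"
  using kspan_sum[OF assms[unfolded equiv_mod_def]] by (simp add: equiv_mod_def sum_subtractf)

lemma map_kspan_into_kspan:
  fixes f :: "'v::ab_group_add \<Rightarrow> 'w::ab_group_add"
  assumes neg: "\<And>y. sc' (-1) y = - y"
    and V: "S \<subseteq> V" "0 \<in> V" "\<And>x y. x \<in> V \<Longrightarrow> y \<in> V \<Longrightarrow> x + y \<in> V"
      "\<And>r x. x \<in> V \<Longrightarrow> sc r x \<in> V"
    and add: "\<And>x y. x \<in> V \<Longrightarrow> y \<in> V \<Longrightarrow> f (x + y) \<sim> f x + f y (mod kspan sc' T)"
    and scale: "\<And>r x. x \<in> V \<Longrightarrow> f (sc r x) \<sim> sc' r (f x) (mod kspan sc' T)"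
    and base: "\<And>x. x \<in> S \<Longrightarrow> f x \<in> kspan sc' T"
    and x: "x \<in> kspan sc S"
  shows "f x \<in> kspan sc' T"
proof -
  from x have "x \<in> V \<and> f x \<in> kspan sc' T"
  proof (induction rule: kspan.induct)
    case kspan_zero
    have "- f 0 \<in> kspan sc' T"
      using add[OF V(2) V(2)] by (simp add: equiv_mod_def)
    then show ?case using kspan_uminus[of sc', OF neg] V(2) by fastforce
  next
    case (kspan_base x)
    then show ?case using V(1) base by blast
  next
    case (kspan_add x y)
    then have "f (x + y) - (f x + f y) \<in> kspan sc' T" "f x + f y \<in> kspan sc' T"
      using add[of x y] by (auto simp: equiv_mod_def intro: kspan.kspan_add)
    then have "f (x + y) - (f x + f y) + (f x + f y) \<in> kspan sc' T"
      by (rule kspan.kspan_add)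
    then show ?case using kspan_add V(3) by simp
  next
    case (kspan_scale x r)
    then have "f (sc r x) - sc' r (f x) \<in> kspan sc' T" "sc' r (f x) \<in> kspan sc' T"
      using scale[of x r] by (auto simp: equiv_mod_def intro: kspan.kspan_scale)
    then have "f (sc r x) - sc' r (f x) + sc' r (f x) \<in> kspan sc' T"
      by (rule kspan.kspan_add)
    then show ?case using kspan_scale V(4) by simp
  qed
  then show ?thesis ..
qed

lemma map_diff_mod:
  fixes f :: "'v::ab_group_add \<Rightarrow> 'w::ab_group_add"
  assumes neg: "\<And>y. sc' (-1) y = - y"
    and add: "\<And>x y. f (x + y) \<sim> f x + f y (mod kspan sc' T)"
  shows "f (x - y) \<sim> f x - f y (mod kspan sc' T)"
proof -
  have "- (f x - (f (x - y) + f y)) \<in> kspan sc' T"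
    using kspan_uminus[OF neg add[of "x - y" y, unfolded equiv_mod_def]] by simp
  then show ?thesis by (simp add: equiv_mod_def algebra_simps)
qed

lemma map_sum_mod:
  fixes f :: "'v::comm_monoid_add \<Rightarrow> 'w::ab_group_add"
  assumes neg: "\<And>y. sc' (-1) y = - y"
    and add: "\<And>x y. f (x + y) \<sim> f x + f y (mod kspan sc' T)"
    and "finite I"
  shows "f (sum g I) \<sim> (\<Sum>i\<in>I. f (g i)) (mod kspan sc' T)"
  using \<open>finite I\<close>
proof (induction I rule: finite_induct)
  case empty
  show ?case
    using kspan_uminus[OF neg add[of 0 0, unfolded equiv_mod_def]] by (simp add: equiv_mod_def)
next
  case (insert i I)
  have "f (sum g (insert i I)) = f (g i + sum g I)"
    using insert by simp
  also have "\<dots> \<sim> f (g i) + f (sum g I) (mod kspan sc' T)"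
    by (rule add)
  also have "f (g i) + f (sum g I) \<sim> f (g i) + (\<Sum>i\<in>I. f (g i)) (mod kspan sc' T)"
    using insert.IH by (simp add: equiv_mod_def)
  finally show ?case
    using insert by simp
qed

lemma sum_apply: "(sum f S) x = (\<Sum>i\<in>S. f i x)"
  by (induction S rule: infinite_finite_induct) auto

lemma fscale_minus_one: "fscale (-1) c = - c"
  by (auto simp: fscale_def)

lemma fscale_diff: "fscale r (c - d) = fscale r c - fscale r d"
  by (auto simp: fscale_def algebra_simps)

lemma equiv_mod_fscale:
  "c \<sim> d (mod kspan fscale S) \<Longrightarrow> fscale r c \<sim> fscale r d (mod kspan fscale S)"
  unfolding equiv_mod_def fscale_diff[symmetric] by (rule kspan_scale)

lemma free_words_delta: "w \<noteq> [] \<Longrightarrow> delta w \<in> free_words"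
  by (simp add: free_words_def delta_def)

lemma free_words_zero: "0 \<in> free_words"
  by (simp add: free_words_def)

lemma free_words_add:
  assumes "c \<in> free_words" "d \<in> free_words"
  shows "c + d \<in> free_words"
proof -
  have "{l. (c + d) l \<noteq> 0} \<subseteq> {l. c l \<noteq> 0} \<union> {l. d l \<noteq> 0}"
    by auto
  then show "c + d \<in> free_words"
    using assms unfolding free_words_def by (auto intro: finite_subset)
qed

lemma free_words_fscale: "c \<in> free_words \<Longrightarrow> fscale r c \<in> free_words"
  unfolding free_words_def fscale_def by (auto intro: rev_finite_subset) (metis mult_zero_right)

lemma free_words_diff: "c \<in> free_words \<Longrightarrow> d \<in> free_words \<Longrightarrow> c - d \<in> free_words"
  using free_words_add[OF _ free_words_fscale[of d "-1"]] by (simp add: fscale_minus_one)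

lemma sum_fscale_delta:
  "finite {l. c l \<noteq> 0} \<Longrightarrow> (\<Sum>l | c l \<noteq> 0. fscale (c l) (delta l)) = c"
  by (rule ext)
    (simp add: sum_apply fscale_def delta_def if_distrib[where f = "\<lambda>x. _ * x"] cong: if_cong)

definition multiply_out :: "('k \<Rightarrow> 'a::ring_1 \<Rightarrow> 'a) \<Rightarrow> ('a list \<Rightarrow> 'k::zero) \<Rightarrow> 'a" where
  "multiply_out sc c = (\<Sum>l | c l \<noteq> 0. sc (c l) (prod_list l))"

section \<open>Relations of the zeroth hyperoctahedral homology\<close>

context
  fixes sc :: "'k::comm_ring_1 \<Rightarrow> 'a::ring_1 \<Rightarrow> 'a" and bar :: "'a \<Rightarrow> 'a"
begin

lemma HO0_rel_trans [trans]:
  "x \<sim> y (mod HO0_rel sc bar) \<Longrightarrow> y \<sim> z (mod HO0_rel sc bar) \<Longrightarrow> x \<sim> z (mod HO0_rel sc bar)"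
  unfolding HO0_rel_def by (rule equiv_mod_trans)

lemma HO0_rel_additive:
  "(delta [u + v] :: 'a list \<Rightarrow> 'k) \<sim> delta [u] + delta [v] (mod HO0_rel sc bar)"
proof -
  have "delta ([] @ [u + v] @ []) - delta ([] @ [u] @ []) - delta ([] @ [v] @ [])
    \<in> HO0_gens sc bar"
    unfolding HO0_gens_def by blast
  then show ?thesis
    unfolding HO0_rel_def equiv_mod_def by (simp add: diff_diff_eq kspan_base)
qed

lemma HO0_rel_homogeneous:
  "(delta [sc r u] :: 'a list \<Rightarrow> 'k) \<sim> fscale r (delta [u]) (mod HO0_rel sc bar)"
proof -
  have "delta ([] @ [sc r u] @ []) - fscale r (delta ([] @ [u] @ [])) \<in> HO0_gens sc bar"
    unfolding HO0_gens_def by blast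
  then show ?thesis
    unfolding HO0_rel_def equiv_mod_def by (simp add: kspan_base)
qed

lemma HO0_rel_morphism:
  assumes "dh_mor n m L" "length as = Suc n"
  shows "(delta (dh_act bar L lab as) :: 'a list \<Rightarrow> 'k) \<sim> delta as (mod HO0_rel sc bar)"
proof -
  have "delta (dh_act bar L lab as) - delta as \<in> HO0_gens sc bar"
    unfolding HO0_gens_def using assms by blast
  then show ?thesis
    unfolding HO0_rel_def equiv_mod_def by (rule kspan_base)
qed

lemma HO0_rel_prod_list:
  assumes "l \<noteq> []"
  shows "(delta [prod_list l] :: 'a list \<Rightarrow> 'k) \<sim> delta l (mod HO0_rel sc bar)"
proof -
  obtain n where n: "length l = Suc n"
    using assms by (cases l) auto
  have "dh_mor n 0 [[0..<Suc n]]"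
    unfolding dh_mor_def by auto
  from HO0_rel_morphism[OF this n, of "\<lambda>_. False"] show ?thesis
    by (simp add: dh_act_def n[symmetric] map_nth)
qed

lemma HO0_gens_free_words: "HO0_gens sc bar \<subseteq> free_words"
  unfolding HO0_gens_def
  by (auto intro!: free_words_diff free_words_fscale free_words_delta
      simp: dh_act_def dh_mor_def)

lemma delta_diff_mod_HO0_rel:
  "(delta [x - y] :: 'a list \<Rightarrow> 'k) \<sim> delta [x] - delta [y] (mod HO0_rel sc bar)"
  unfolding HO0_rel_def
  by (rule map_diff_mod[where f = "\<lambda>z. delta [z]",
        OF fscale_minus_one HO0_rel_additive[unfolded HO0_rel_def]])

lemma delta_im_d_generator:
  "(delta [a0 * a1 * a2 - a2 * bar a1 * a0] :: 'a list \<Rightarrow> 'k) \<in> HO0_rel sc bar"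
proof -
  have "dh_mor 2 0 [[0, 1, 2]]" "dh_mor 2 0 [[2, 1, 0]]"
    unfolding dh_mor_def by auto
  note identifications = this[THEN HO0_rel_morphism[where as = "[a0, a1, a2]"]]
  have "(delta [a0 * a1 * a2 - a2 * bar a1 * a0] :: 'a list \<Rightarrow> 'k)
      \<sim> delta [a0 * a1 * a2] - delta [a2 * bar a1 * a0] (mod HO0_rel sc bar)"
    by (rule delta_diff_mod_HO0_rel)
  also have "\<dots> \<sim> delta [a0, a1, a2] - delta [a0, a1, a2] (mod HO0_rel sc bar)"
    unfolding HO0_rel_def
    by (rule equiv_mod_diff[where sc = fscale, OF fscale_minus_one])
      (use identifications(1)[of "\<lambda>_. False"] identifications(2)[of "\<lambda>i. i = 1"] in
        \<open>simp_all add: dh_act_def mult.assoc HO0_rel_def\<close>)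
  finally show ?thesis
    by (simp add: equiv_mod_def)
qed

lemma delta_im_d:
  assumes "z \<in> im_d sc bar"
  shows "(delta [z] :: 'a list \<Rightarrow> 'k) \<in> HO0_rel sc bar"
  unfolding HO0_rel_def
proof (rule map_kspan_into_kspan[where V = UNIV and f = "\<lambda>z. delta [z]",
      OF fscale_minus_one subset_UNIV UNIV_I UNIV_I UNIV_I
      HO0_rel_additive[unfolded HO0_rel_def] HO0_rel_homogeneous[unfolded HO0_rel_def]])
  show "z \<in> kspan sc {a0 * a1 * a2 - a2 * bar a1 * a0 |a0 a1 a2. True}"
    using assms unfolding im_d_def .
qed (use delta_im_d_generator[unfolded HO0_rel_def] in blast)

lemma delta_equiv_if_equiv_im_d:
  assumes "x \<sim> y (mod im_d sc bar)"
  shows "(delta [x] :: 'a list \<Rightarrow> 'k) \<sim> delta [y] (mod HO0_rel sc bar)"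
proof -
  have "(delta [x] :: 'a list \<Rightarrow> 'k) - delta [y] \<sim> delta [x - y] (mod HO0_rel sc bar)"
    unfolding HO0_rel_def
    by (rule equiv_mod_sym[OF fscale_minus_one delta_diff_mod_HO0_rel[unfolded HO0_rel_def]])
  also have "\<dots> \<sim> 0 (mod HO0_rel sc bar)"
    using delta_im_d assms by (simp add: equiv_mod_def)
  finally show ?thesis
    by (simp add: equiv_mod_def)
qed

lemma delta_multiply_out:
  assumes "c \<in> free_words"
  shows "delta [multiply_out sc c] \<sim> c (mod HO0_rel sc bar)"
proof -
  let ?S = "{l. c l \<noteq> 0}"
  have fin: "finite ?S" and nonempty: "\<And>l. l \<in> ?S \<Longrightarrow> l \<noteq> []"
    using assms unfolding free_words_def by auto
  have "delta [multiply_out sc c] \<sim> (\<Sum>l\<in>?S. delta [sc (c l) (prod_list l)]) (mod HO0_rel sc bar)"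
    unfolding HO0_rel_def multiply_out_def
    using map_sum_mod[where f = "\<lambda>z. delta [z]",
        OF fscale_minus_one HO0_rel_additive[unfolded HO0_rel_def] fin] .
  also have "\<dots> \<sim> (\<Sum>l\<in>?S. fscale (c l) (delta [prod_list l])) (mod HO0_rel sc bar)"
    unfolding HO0_rel_def
    using fin HO0_rel_homogeneous[unfolded HO0_rel_def] by (rule equiv_mod_sum)
  also have "\<dots> \<sim> (\<Sum>l\<in>?S. fscale (c l) (delta l)) (mod HO0_rel sc bar)"
    unfolding HO0_rel_def
    using fin HO0_rel_prod_list[unfolded HO0_rel_def] nonempty
    by (intro equiv_mod_sum equiv_mod_fscale) auto
  also have "\<dots> = c"
    using fin by (rule sum_fscale_delta)
  finally show ?thesis .
qed

end

section \<open>Multiplying out words modulo the image of d\<close>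

context
  fixes sc :: "'k::comm_ring_1 \<Rightarrow> 'a::ring_1 \<Rightarrow> 'a" and bar :: "'a \<Rightarrow> 'a"
  assumes inv_algebra: "inv_algebra sc bar"
begin

lemma sc_add_right: "sc r (x + y) = sc r x + sc r y"
  using inv_algebra unfolding inv_algebra_def by blast

lemma sc_add_left: "sc (r + q) x = sc r x + sc q x"
  using inv_algebra unfolding inv_algebra_def by blast

lemma sc_sc: "sc r (sc q x) = sc (r * q) x"
  using inv_algebra unfolding inv_algebra_def by metis

lemma sc_one: "sc 1 x = x"
  using inv_algebra unfolding inv_algebra_def by blast

lemma mult_sc_left: "sc r x * y = sc r (x * y)"
  using inv_algebra unfolding inv_algebra_def by metis

lemma mult_sc_right: "x * sc r y = sc r (x * y)"
  using inv_algebra unfolding inv_algebra_def by metis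

lemma bar_one: "bar 1 = 1"
  using inv_algebra unfolding inv_algebra_def by blast

lemma sc_zero_right: "sc r 0 = 0"
  using sc_add_right[of r 0 0] by simp

lemma sc_zero_left: "sc 0 x = 0"
  using sc_add_left[of 0 0 x] by simp

lemma sc_minus_one: "sc (-1) x = - x"
  using sc_add_left[of "-1" 1 x] by (simp add: sc_zero_left sc_one eq_neg_iff_add_eq_0)

lemma sc_sum: "sc r (sum f I) = (\<Sum>i\<in>I. sc r (f i))"
  by (induction I rule: infinite_finite_induct) (auto simp: sc_zero_right sc_add_right)

abbreviation equiv_im_d :: "'a \<Rightarrow> 'a \<Rightarrow> bool"  (infix \<open>\<approx>\<close> 50)
  where "x \<approx> y \<equiv> x \<sim> y (mod im_d sc bar)"

lemma equiv_im_d_refl [simp]: "x \<approx> x"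
  unfolding im_d_def by (rule equiv_mod_refl)

lemma equiv_im_d_trans [trans]: "x \<approx> y \<Longrightarrow> y \<approx> z \<Longrightarrow> x \<approx> z"
  unfolding im_d_def by (rule equiv_mod_trans)

lemma equiv_im_d_sym: "x \<approx> y \<Longrightarrow> y \<approx> x"
  unfolding im_d_def by (rule equiv_mod_sym[where sc = sc, OF sc_minus_one])

lemma im_d_generator: "a0 * a1 * a2 \<approx> a2 * bar a1 * a0"
  unfolding im_d_def equiv_mod_def by (rule kspan_base) blast

lemma mult_commute_mod_im_d: "x * y \<approx> y * x"
  using im_d_generator[of x 1 y] by (simp add: bar_one)

lemma mult_bar_left_mod_im_d: "bar b * c \<approx> b * c"
proof -
  have "b * c \<approx> c * bar b"
    using im_d_generator[of 1 b c] by simp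
  also have "c * bar b \<approx> bar b * c"
    by (rule mult_commute_mod_im_d)
  finally show ?thesis
    by (rule equiv_im_d_sym)
qed

lemma mult_swap_mod_im_d: "a * b * c \<approx> b * a * c"
proof -
  have "a * b * c \<approx> c * (bar b * a)"
    using im_d_generator[of a b c] by (simp add: mult.assoc)
  also have "\<dots> \<approx> bar b * a * c"
    by (rule mult_commute_mod_im_d)
  also have "\<dots> \<approx> b * a * c"
    using mult_bar_left_mod_im_d[of b "a * c"] by (simp add: mult.assoc)
  finally show ?thesis .
qed

lemma prod_list_perm_mod_im_d:
  "mset l = mset l' \<Longrightarrow> P * prod_list l \<approx> P * prod_list l'"
proof (induction l arbitrary: l' P)
  case Nil
  then show ?case by simp
next
  case (Cons x xs)
  then have "x \<in> set l'"
    by (metis list.set_intros(1) set_mset_mset)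
  then obtain us vs where l': "l' = us @ x # vs"
    by (meson split_list)
  have "P * prod_list (x # xs) = (P * x) * prod_list xs"
    by (simp add: mult.assoc)
  also have "\<dots> \<approx> (P * x) * prod_list (us @ vs)"
    using Cons.IH[of "us @ vs"] Cons.prems l' by simp
  also have "\<dots> \<approx> x * P * (prod_list us * prod_list vs)"
    using mult_swap_mod_im_d by simp
  also have "\<dots> = x * (P * prod_list us) * prod_list vs"
    by (simp add: mult.assoc)
  also have "\<dots> \<approx> P * prod_list us * x * prod_list vs"
    by (rule mult_swap_mod_im_d)
  also have "\<dots> = P * prod_list l'"
    by (simp add: l' mult.assoc)
  finally show ?case .
qed

lemma mult_bar_mod_im_d: "P * bar x * R \<approx> P * x * R"
proof -
  have "P * bar x * R \<approx> bar x * P * R"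
    by (rule mult_swap_mod_im_d)
  also have "\<dots> \<approx> x * P * R"
    using mult_bar_left_mod_im_d[of x "P * R"] by (simp add: mult.assoc)
  also have "\<dots> \<approx> P * x * R"
    by (rule mult_swap_mod_im_d)
  finally show ?thesis .
qed

lemma prod_list_bar_mod_im_d:
  "(\<And>i. i \<in> set ys \<Longrightarrow> h i = v i \<or> h i = bar (v i)) \<Longrightarrow>
    P * prod_list (map h ys) \<approx> P * prod_list (map v ys)"
proof (induction ys arbitrary: P)
  case Nil
  then show ?case by simp
next
  case (Cons y ys)
  have "P * h y * prod_list (map h ys) \<approx> P * v y * prod_list (map h ys)"
    using Cons.prems[of y] mult_bar_mod_im_d by auto
  also have "\<dots> \<approx> P * v y * prod_list (map v ys)"
    using Cons by simp
  finally show ?case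
    by (simp add: mult.assoc)
qed

lemma prod_list_dh_act_mod_im_d:
  assumes "dh_mor n m L" "length as = Suc n"
  shows "prod_list (dh_act bar L lab as) \<approx> prod_list as"
proof -
  define h where "h x = (if lab x then bar (as ! x) else as ! x)" for x
  have "prod_list (dh_act bar L lab as) = 1 * prod_list (map h (concat L))"
    unfolding dh_act_def h_def by (induction L) auto
  also have "\<dots> \<approx> 1 * prod_list (map (\<lambda>x. as ! x) (concat L))"
    by (rule prod_list_bar_mod_im_d) (auto simp: h_def)
  also have "\<dots> \<approx> 1 * prod_list (map (\<lambda>x. as ! x) [0..<length as])"
  proof (rule prod_list_perm_mod_im_d)
    have "mset (concat L) = mset [0..<length as]"
      using assms unfolding dh_mor_def
      by (subst set_eq_iff_mset_eq_distinct[symmetric])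
        (auto simp: atLeast0_atMost_Suc atLeast0AtMost lessThan_Suc_atMost)
    then show "mset (map (\<lambda>x. as ! x) (concat L)) = mset (map (\<lambda>x. as ! x) [0..<length as])"
      by (metis mset_map)
  qed
  finally show ?thesis
    by (simp add: map_nth)
qed

lemma multiply_out_eq_sum:
  assumes "finite S" "{l. c l \<noteq> 0} \<subseteq> S"
  shows "multiply_out sc c = (\<Sum>l\<in>S. sc (c l) (prod_list l))"
  unfolding multiply_out_def using assms
  by (intro sum.mono_neutral_left) (auto simp: sc_zero_left)

lemma multiply_out_add:
  assumes "c \<in> free_words" "d \<in> free_words"
  shows "multiply_out sc (c + d) = multiply_out sc c + multiply_out sc d"
proof -
  let ?S = "{l. c l \<noteq> 0} \<union> {l. d l \<noteq> 0}"
  have "finite ?S"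
    using assms by (simp add: free_words_def)
  then show ?thesis
    by (subst (1 2 3) multiply_out_eq_sum[of ?S]) (auto simp: sc_add_left sum.distrib)
qed

lemma multiply_out_fscale:
  assumes "c \<in> free_words"
  shows "multiply_out sc (fscale r c) = sc r (multiply_out sc c)"
proof -
  have "finite {l. c l \<noteq> 0}"
    using assms by (simp add: free_words_def)
  then show ?thesis
    by (subst (1 2) multiply_out_eq_sum[of "{l. c l \<noteq> 0}"])
      (auto simp: fscale_def sc_sum sc_sc)
qed

lemma multiply_out_diff:
  assumes "c \<in> free_words" "d \<in> free_words"
  shows "multiply_out sc (c - d) = multiply_out sc c - multiply_out sc d"
  using multiply_out_add[OF free_words_diff[OF assms] assms(2)] by simp

lemma multiply_out_delta: "multiply_out sc (delta w) = prod_list w"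
  by (simp add: multiply_out_def delta_def sc_one)

lemma multiply_out_HO0_gens:
  assumes "c \<in> HO0_gens sc bar"
  shows "multiply_out sc c \<in> im_d sc bar"
proof -
  have "0 \<in> im_d sc bar"
    unfolding im_d_def by (rule kspan_zero)
  from assms consider
      (additive) xs a b ys where
        "c = delta (xs @ [a + b] @ ys) - delta (xs @ [a] @ ys) - delta (xs @ [b] @ ys)"
    | (homogeneous) xs r a ys where "c = delta (xs @ [sc r a] @ ys) - fscale r (delta (xs @ [a] @ ys))"
    | (morphism) n m L lab as where
        "c = delta (dh_act bar L lab as) - delta as" "dh_mor n m L" "length as = Suc n"
    unfolding HO0_gens_def by blast
  then show ?thesis
  proof cases
    case additive
    then show ?thesis
      using \<open>0 \<in> im_d sc bar\<close>
      by (simp add: multiply_out_diff free_words_diff free_words_delta multiply_out_delta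
          distrib_left distrib_right)
  next
    case homogeneous
    then show ?thesis
      using \<open>0 \<in> im_d sc bar\<close>
      by (simp add: multiply_out_diff free_words_fscale free_words_delta multiply_out_fscale
          multiply_out_delta mult_sc_left mult_sc_right)
  next
    case morphism
    have "dh_act bar L lab as \<noteq> []" "as \<noteq> []"
      using morphism(2,3) by (auto simp: dh_act_def dh_mor_def)
    then show ?thesis
      using prod_list_dh_act_mod_im_d[OF morphism(2,3), of lab] morphism(1)
      by (simp add: equiv_mod_def multiply_out_diff free_words_delta multiply_out_delta)
  qed
qed

lemma multiply_out_HO0_rel:
  assumes "c \<in> HO0_rel sc bar"
  shows "multiply_out sc c \<in> im_d sc bar"
  unfolding im_d_def
  by (rule map_kspan_into_kspan[where sc = fscale and sc' = sc and f = "multiply_out sc",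
        OF sc_minus_one HO0_gens_free_words free_words_zero free_words_add free_words_fscale _ _
        multiply_out_HO0_gens[unfolded im_d_def] assms[unfolded HO0_rel_def]])
    (simp_all add: multiply_out_add multiply_out_fscale)

lemma equiv_im_d_if_delta_equiv:
  assumes "(delta [x] :: 'a list \<Rightarrow> 'k) \<sim> delta [y] (mod HO0_rel sc bar)"
  shows "x \<approx> y"
  using multiply_out_HO0_rel[OF assms[unfolded equiv_mod_def]]
  by (simp add: equiv_mod_def multiply_out_diff free_words_delta multiply_out_delta)

end

theorem corollary5p6:
  fixes sc :: "'k::comm_ring_1 \<Rightarrow> 'a::ring_1 \<Rightarrow> 'a" and bar :: "'a \<Rightarrow> 'a"
  assumes "inv_algebra sc bar"
  shows "quot_iso sc UNIV (im_d sc bar)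
           (fscale :: 'k \<Rightarrow> ('a list \<Rightarrow> 'k) \<Rightarrow> _) free_words (HO0_rel sc bar)"
  unfolding quot_iso_def
proof (intro exI[of _ "\<lambda>x. delta [x]"] conjI ballI allI)
  fix x y :: 'a and r :: 'k and c :: "'a list \<Rightarrow> 'k"
  show "delta [x] \<in> free_words"
    by (simp add: free_words_delta)
  show "delta [x] - delta [y] \<in> HO0_rel sc bar \<longleftrightarrow> x - y \<in> im_d sc bar"
    using delta_equiv_if_equiv_im_d equiv_im_d_if_delta_equiv[OF assms]
    unfolding equiv_mod_def by blast
  show "delta [x + y] - (delta [x] + delta [y]) \<in> HO0_rel sc bar"
    using HO0_rel_additive unfolding equiv_mod_def .
  show "delta [sc r x] - fscale r (delta [x]) \<in> HO0_rel sc bar"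
    using HO0_rel_homogeneous unfolding equiv_mod_def .
  assume "c \<in> free_words"
  then show "\<exists>x\<in>UNIV. delta [x] - c \<in> HO0_rel sc bar"
    using delta_multiply_out unfolding equiv_mod_def by blast
qed

end
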